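(* Let $G$ be a finite group and let $x_1, \dots, x_n$ be representatives of the distinct rational classes of $G$. Then $$|\mathrm{Solv}(G)| \leq \sum_{i=1}^n [G : N_G(\langle x_i \rangle)].$$
   Context: For a finite group $G$ and $x \in G$, the solvabilizer of $x$ in $G$ is $\mathrm{Sol}_G(x) = \{y \in G : \langle x, y \rangle \text{ is solvable}\}$; $\mathrm{Solv}(G) = \{\mathrm{Sol}_G(x) : x \in G\}$ is the set of distinct solvabilizers. The rational class of $x \in G$ is the union of the conjugacy classes $(x^i)^G$ over all integers $i$ with $\gcd(|x|, i) = 1$. *)

theory Defs
  imports "HOL-Algebra.Algebra"
begin

definition solvabilizer :: "('a, 'b) monoid_scheme \<Rightarrow> 'a \<Rightarrow> 'a set" where
  "solvabilizer G x = {y \<in> carrier G. solvable (subgroup_generated G {x, y})}"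

definition Solv :: "('a, 'b) monoid_scheme \<Rightarrow> 'a set set" where
  "Solv G = solvabilizer G ` carrier G"

definition conj_class :: "('a, 'b) monoid_scheme \<Rightarrow> 'a \<Rightarrow> 'a set" where
  "conj_class G x = {g \<otimes>\<^bsub>G\<^esub> x \<otimes>\<^bsub>G\<^esub> inv\<^bsub>G\<^esub> g | g. g \<in> carrier G}"

definition rational_class :: "('a, 'b) monoid_scheme \<Rightarrow> 'a \<Rightarrow> 'a set" where
  "rational_class G x =
     (\<Union>i \<in> {i :: int. coprime (int (group.ord G x)) i}. conj_class G (x [^]\<^bsub>G\<^esub> i))"

definition rational_classes :: "('a, 'b) monoid_scheme \<Rightarrow> 'a set set" where
  "rational_classes G = rational_class G ` carrier G"

end

theory Submission
  imports Defs
begin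

text \<open>The solvabilizer of \<open>y\<close> only depends on the cyclic subgroup \<open>\<langle>y\<rangle>\<close>, so
  \<open>|Solv(G)|\<close> is at most the number of cyclic subgroups of \<open>G\<close>. If \<open>y\<close> lies in the rational
  class of \<open>x\<close>, then \<open>y\<close> is conjugate to a generator \<open>x\<^sup>i\<close> of \<open>\<langle>x\<rangle>\<close>, so \<open>\<langle>y\<rangle>\<close> is conjugate
  to \<open>\<langle>x\<rangle>\<close>. Hence every cyclic subgroup is a conjugate of some \<open>\<langle>x\<^sub>i\<rangle>\<close>, and by the
  orbit-stabilizer theorem \<open>\<langle>x\<^sub>i\<rangle>\<close> has exactly \<open>[G : N\<^sub>G(\<langle>x\<^sub>i\<rangle>)]\<close> conjugates.\<close>

lemma card_image_le_card_image_if_factors: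
  assumes "finite A" and "\<And>x y. x \<in> A \<Longrightarrow> y \<in> A \<Longrightarrow> g x = g y \<Longrightarrow> f x = f y"
  shows "card (f ` A) \<le> card (g ` A)"
proof -
  have "f ` A = (f \<circ> inv_into A g) ` g ` A"
    unfolding image_comp
  proof (rule image_cong)
    fix x assume "x \<in> A"
    then show "f x = (f \<circ> inv_into A g \<circ> g) x"
      using assms(2)[of x "inv_into A g (g x)"] by (simp add: inv_into_into f_inv_into_f)
  qed simp
  then show ?thesis
    using assms(1) by (simp add: card_image_le)
qed

definition conjugates :: "('a, 'b) monoid_scheme \<Rightarrow> 'a set \<Rightarrow> 'a set set" where
  "conjugates G H = {g <#\<^bsub>G\<^esub> H #>\<^bsub>G\<^esub> inv\<^bsub>G\<^esub> g | g. g \<in> carrier G}"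

context group
begin

lemma generate_insert_eq_if_generate_eq:
  assumes "a \<in> carrier G" "b \<in> carrier G" "Y \<subseteq> carrier G"
    and "generate G {a} = generate G {b}"
  shows "generate G (insert a Y) = generate G (insert b Y)"
proof -
  have "generate G (insert a Y) \<subseteq> generate G (insert b Y)"
    if "b \<in> carrier G" "generate G {a} = generate G {b}" for a b
  proof (rule generate_subgroup_incl)
    have "a \<in> generate G {b}"
      using that(2) generate.incl[of a "{a}" G] by simp
    also have "\<dots> \<subseteq> generate G (insert b Y)"
      by (rule mono_generate) simp
    finally show "insert a Y \<subseteq> generate G (insert b Y)"
      using generate.incl[of _ "insert b Y" G] by blast
    show "subgroup (generate G (insert b Y)) G"
      using that(1) assms(3) by (intro generate_is_subgroup) simp
  qed
  then show ?thesis
    using assms by (metis subset_antisym)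
qed

lemma solvabilizer_eq_if_generate_eq:
  assumes "a \<in> carrier G" "b \<in> carrier G" and "generate G {a} = generate G {b}"
  shows "solvabilizer G a = solvabilizer G b"
proof -
  have "subgroup_generated G {a, y} = subgroup_generated G {b, y}" if "y \<in> carrier G" for y
    using that assms generate_insert_eq_if_generate_eq[of a b "{y}"]
    by (simp add: subgroup_generated_def insert_absorb)
  then show ?thesis
    unfolding solvabilizer_def by auto
qed

lemma generate_pow_coprime:
  assumes x: "x \<in> carrier G" and "coprime (int (ord x)) i"
  shows "generate G {x [^] i} = generate G {x}"
proof
  show "generate G {x [^] i} \<subseteq> generate G {x}"
    using x by (intro generate_subgroup_incl generate_is_subgroup) (auto simp: generate_pow)
  obtain u v where "u * int (ord x) + v * i = 1"
    using bezout_int[of "int (ord x)" i] assms(2) by auto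
  then have "int (ord x) dvd 1 - i * v"
    by (metis add_diff_cancel_right' dvd_triv_right mult.commute)
  then have "x [^] (i * v) = x [^] (1::int)"
    by (subst int_pow_eq[OF x])
  then have "(x [^] i) [^] v = x"
    using x by (simp add: int_pow_pow)
  then have "x \<in> generate G {x [^] i}"
    using x generate_pow[of "x [^] i"] by (auto intro: exI[of _ v])
  then show "generate G {x} \<subseteq> generate G {x [^] i}"
    using x by (intro generate_subgroup_incl generate_is_subgroup) auto
qed

lemma conjugation_hom:
  assumes "g \<in> carrier G"
  shows "(\<lambda>h. g \<otimes> h \<otimes> inv g) \<in> hom G G"
proof (rule homI)
  fix x y assume "x \<in> carrier G" "y \<in> carrier G"
  then show "g \<otimes> (x \<otimes> y) \<otimes> inv g = g \<otimes> x \<otimes> inv g \<otimes> (g \<otimes> y \<otimes> inv g)"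
    using assms by (simp add: m_assoc inv_solve_left)
qed (use assms in simp)

lemma generate_conjugate:
  assumes "g \<in> carrier G" "a \<in> carrier G"
  shows "generate G {g \<otimes> a \<otimes> inv g} = g <# generate G {a} #> inv g"
proof -
  interpret conj: group_hom G G "\<lambda>h. g \<otimes> h \<otimes> inv g"
    using conjugation_hom[OF assms(1)] by (simp add: group_hom_def group_hom_axioms_def is_group)
  have "generate G {g \<otimes> a \<otimes> inv g} = (\<lambda>h. g \<otimes> h \<otimes> inv g) ` generate G {a}"
    using assms(2) conj.generate_img[of "{a}"] by simp
  also have "\<dots> = g <# generate G {a} #> inv g"
    using assms generate_in_carrier[of "{a}"]
    by (force simp: l_coset_def r_coset_def m_assoc)
  finally show ?thesis .
qed

lemma mem_rational_class_self:
  assumes "y \<in> carrier G"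
  shows "y \<in> rational_class G y"
proof -
  have "y \<in> conj_class G (y [^] (1::int))"
    using assms unfolding conj_class_def by (force intro: exI[of _ \<one>])
  then show ?thesis
    unfolding rational_class_def by force
qed

lemma generate_conjugate_if_mem_rational_class:
  assumes "x \<in> carrier G" and "y \<in> rational_class G x"
  shows "generate G {y} \<in> conjugates G (generate G {x})"
proof -
  obtain i g where "coprime (int (ord x)) i" "g \<in> carrier G" "y = g \<otimes> x [^] i \<otimes> inv g"
    using assms(2) unfolding rational_class_def conj_class_def by auto
  then have "generate G {y} = g <# generate G {x} #> inv g"
    using assms(1) by (simp add: generate_conjugate generate_pow_coprime)
  then show ?thesis
    using \<open>g \<in> carrier G\<close> unfolding conjugates_def by blast
qed

lemma cyclic_subgroups_subset_conjugates:
  assumes "R \<subseteq> carrier G" and "rational_classes G \<subseteq> rational_class G ` R"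
  shows "(\<lambda>y. generate G {y}) ` carrier G \<subseteq> (\<Union>x\<in>R. conjugates G (generate G {x}))"
proof clarify
  fix y assume y: "y \<in> carrier G"
  then obtain x where "x \<in> R" "rational_class G y = rational_class G x"
    using assms(2) unfolding rational_classes_def by blast
  then show "generate G {y} \<in> (\<Union>x\<in>R. conjugates G (generate G {x}))"
    using assms(1) y mem_rational_class_self generate_conjugate_if_mem_rational_class by blast
qed

lemma card_conjugates:
  assumes "finite (carrier G)" and "H \<subseteq> carrier G"
  shows "card (conjugates G H) = card (rcosets (normalizer G H))"
proof -
  let ?act = "\<lambda>g. \<lambda>H \<in> {H. H \<subseteq> carrier G}. g <# H #> inv g"
  interpret conj: group_action G "{H. H \<subseteq> carrier G}" ?act
    by (rule action_by_conjugation_on_power_set)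
  have "orbit G ?act H = conjugates G H"
    using assms(2) unfolding orbit_def conjugates_def by simp
  then have "card (conjugates G H) * card (normalizer G H) = order G"
    using conj.orbit_stabilizer_theorem[of H] assms unfolding normalizer_def by simp
  moreover have "card (rcosets (normalizer G H)) * card (normalizer G H) = order G"
    using lagrange normalizer_imp_subgroup assms(2) by blast
  moreover have "card (normalizer G H) > 0"
    using normalizer_imp_subgroup[OF assms(2)] assms(1)
    by (metis card_gt_0_iff empty_iff finite_subset subgroup.one_closed subgroup.subset)
  ultimately show ?thesis
    by (metis mult_right_cancel less_irrefl)
qed

lemma finite_conjugates:
  assumes "finite (carrier G)" and "H \<subseteq> carrier G"
  shows "finite (conjugates G H)"
proof (rule finite_subset)
  show "conjugates G H \<subseteq> Pow (carrier G)"
    using assms(2) unfolding conjugates_def by (auto simp: l_coset_def r_coset_def)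
qed (use assms in simp)

end

theorem corollary6p3:
  fixes G :: "('a, 'b) monoid_scheme" and R :: "'a set"
  assumes "group G"
    and "finite (carrier G)"
    and "R \<subseteq> carrier G"
    and "bij_betw (rational_class G) R (rational_classes G)"
  shows "card (Solv G)
           \<le> (\<Sum>x\<in>R. card (rcosets\<^bsub>G\<^esub> (normalizer G (generate G {x}))))"
proof -
  interpret group G by (fact assms(1))
  have "finite R"
    using assms(2,3) finite_subset by blast
  have cyclic_in_carrier: "generate G {x} \<subseteq> carrier G" if "x \<in> R" for x
    using that assms(3) generate_in_carrier[of "{x}"] by blast
  have "card (Solv G) \<le> card ((\<lambda>y. generate G {y}) ` carrier G)"
    unfolding Solv_def
    by (intro card_image_le_card_image_if_factors assms(2) solvabilizer_eq_if_generate_eq)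
  also have "\<dots> \<le> card (\<Union>x\<in>R. conjugates G (generate G {x}))"
    using assms \<open>finite R\<close> cyclic_in_carrier
    by (intro card_mono cyclic_subgroups_subset_conjugates finite_UN_I finite_conjugates)
      (auto simp: bij_betw_def)
  also have "\<dots> \<le> (\<Sum>x\<in>R. card (conjugates G (generate G {x})))"
    by (rule card_UN_le[OF \<open>finite R\<close>])
  also have "\<dots> = (\<Sum>x\<in>R. card (rcosets\<^bsub>G\<^esub> (normalizer G (generate G {x}))))"
    using assms(2) cyclic_in_carrier by (intro sum.cong refl card_conjugates)
  finally show ?thesis .
qed

end
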